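(* Let $\{a(n)\}_{n\in\mathbb{N}}$ be a sequence of non-negative numbers with $\sum_{n=1}^{\infty}a(n)\le 1$, and for $n\in\mathbb{N}$ let $B_n:=\{n,2n,\ldots,n^2\}$. Then for every $\varepsilon>0$ there exist infinitely many $n\in\mathbb{N}$ such that $\sum_{\lambda,\mu\in B_n,\ \mu<\lambda}a(\lambda-\mu)<\varepsilon$. *)

theory Defs
  imports "HOL-Analysis.Analysis"
begin

definition B :: "nat \<Rightarrow> nat set" where
  "B n = {k * n | k. k \<in> {1..n}}"

end

theory Submission
  imports Defs "HOL-Computational_Algebra.Primes"
begin

text \<open>
  All differences \<open>\<lambda> - \<mu>\<close> with \<open>\<mu> < \<lambda>\<close> in \<open>B n\<close> are positive multiples of \<open>n\<close> below \<open>n\<^sup>2\<close>,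
  and each arises from at most \<open>n\<close> pairs; so the sum in question is at most \<open>n\<close> times the mass
  of \<open>a\<close> on these multiples. For distinct primes \<open>p\<close> these sets of multiples are disjoint, so
  their masses add up to at most \<open>\<Sum> a \<le> 1\<close>. If the sum were \<open>\<ge> \<epsilon>\<close> for all large \<open>n\<close>, the mass
  at every large prime \<open>p\<close> would be at least \<open>\<epsilon>/p\<close>, contradicting the divergence of
  \<open>\<Sum>\<^sub>p 1/p\<close>, which we prove by Erdos's counting argument.
\<close>

lemma exists_pow2_ge_poly: "\<exists>m::nat. 2 * (m + 1) ^ (K + 1) \<le> 2 ^ m"
proof -
  define c where "c = 2 * (K + 2) ^ (K + 1)"
  define m where "m = (c - 1) * (K + 2)"
  have "c \<ge> 1" unfolding c_def by (simp add: Suc_le_eq)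
  then have "2 * (m + 1) ^ (K + 1) \<le> 2 * (c * (K + 2)) ^ (K + 1)"
    unfolding m_def by (intro mult_left_mono power_mono) (auto simp: algebra_simps)
  also have "\<dots> = c * c ^ (K + 1)" unfolding power_mult_distrib c_def by (simp only: ac_simps)
  also have "\<dots> = c ^ (K + 2)" by simp
  also have "\<dots> \<le> (2 ^ (c - 1)) ^ (K + 2)"
    using less_exp[of "c - 1"] \<open>c \<ge> 1\<close> by (intro power_mono) linarith+
  also have "\<dots> = 2 ^ m" unfolding m_def by (rule power_mult[symmetric])
  finally show ?thesis by blast
qed

lemma card_multiples_le: "card {n \<in> {1..X}. (p::nat) dvd n} \<le> X div p"
proof -
  have "{n \<in> {1..X}. p dvd n} \<subseteq> (\<lambda>k. k * p) ` {1..X div p}"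
  proof
    fix n assume "n \<in> {n \<in> {1..X}. p dvd n}"
    then obtain k where k: "n = p * k" "1 \<le> n" "n \<le> X" by auto
    then have "p > 0" "k \<ge> 1" by (auto intro: Nat.gr0I)
    moreover have "k \<le> X div p" using k \<open>p > 0\<close>
      by (metis div_le_mono nonzero_mult_div_cancel_left not_gr0)
    ultimately show "n \<in> (\<lambda>k. k * p) ` {1..X div p}" using k by (auto simp: mult.commute)
  qed
  then have "card {n \<in> {1..X}. p dvd n} \<le> card ((\<lambda>k. k * p) ` {1..X div p})"
    by (intro card_mono) auto
  also have "\<dots> \<le> card {1..X div p}" by (rule card_image_le) auto
  finally show ?thesis by simp
qed

text \<open>A \<open>K\<close>-smooth number up to \<open>2\<^sup>m\<close> is determined by its exponents at the primes \<open>\<le> K\<close>, each \<open>\<le> m\<close>.\<close>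

lemma card_smooth_le:
  assumes "X \<le> 2 ^ m"
  shows "card {n \<in> {1..X}. \<forall>p. prime p \<longrightarrow> p dvd n \<longrightarrow> p \<le> K} \<le> (m + 1) ^ (K + 1)"
    (is "card ?A \<le> _")
proof -
  define f where "f = (\<lambda>n. \<lambda>i\<in>{..K}. if prime i then multiplicity i n else 0)"
  have "f ` ?A \<subseteq> PiE {..K} (\<lambda>_. {..m})"
  proof
    fix g assume "g \<in> f ` ?A"
    then obtain n where n: "n \<in> ?A" "g = f n" by auto
    have "multiplicity i n \<le> m" if "prime i" for i
    proof -
      have "2 ^ multiplicity i n \<le> i ^ multiplicity i n"
        using prime_ge_2_nat[OF that] by (intro power_mono) auto
      also have "\<dots> \<le> n" using n by (intro dvd_imp_le multiplicity_dvd) auto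
      also have "\<dots> \<le> 2 ^ m" using n assms by auto
      finally show ?thesis by simp
    qed
    then show "g \<in> PiE {..K} (\<lambda>_. {..m})" using n by (auto simp: f_def)
  qed
  moreover have "inj_on f ?A"
  proof
    fix n n' assume n: "n \<in> ?A" and n': "n' \<in> ?A" and eq: "f n = f n'"
    have "multiplicity q n = multiplicity q n'" if q: "prime q" for q
    proof (cases "q \<le> K")
      case True
      then show ?thesis using fun_cong[OF eq, of q] q by (simp add: f_def)
    next
      case False
      then have "\<not> q dvd n" "\<not> q dvd n'" using n n' q by auto
      then show ?thesis by (simp add: not_dvd_imp_multiplicity_0)
    qed
    then have "normalize n = normalize n'" using n n' by (intro multiplicity_eq_imp_eq) auto
    then show "n = n'" by simp
  qed
  ultimately have "card ?A \<le> card (PiE {..K} (\<lambda>_. {..m::nat}))"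
    by (auto simp: card_image[symmetric] intro!: card_mono finite_PiE)
  also have "\<dots> = (m + 1) ^ (K + 1)" by (simp add: card_PiE)
  finally show ?thesis .
qed

lemma card_rough_le:
  "real (card {n \<in> {1..X}. \<exists>p. prime p \<and> K < p \<and> p dvd n})
     \<le> real X * (\<Sum>p | prime p \<and> K < p \<and> p \<le> X. 1 / real p)"
proof -
  let ?P = "{p. prime p \<and> K < p \<and> p \<le> X}"
  have "finite ?P" by (rule finite_subset[of _ "{..X}"]) auto
  have "{n \<in> {1..X}. \<exists>p. prime p \<and> K < p \<and> p dvd n} = (\<Union>p\<in>?P. {n \<in> {1..X}. p dvd n})"
    by (auto 0 4 intro: order_trans[OF dvd_imp_le])
  then have "card {n \<in> {1..X}. \<exists>p. prime p \<and> K < p \<and> p dvd n}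
               \<le> (\<Sum>p\<in>?P. card {n \<in> {1..X}. p dvd n})"
    by (simp only: card_UN_le[OF \<open>finite ?P\<close>])
  also have "\<dots> \<le> (\<Sum>p\<in>?P. X div p)" by (intro sum_mono card_multiples_le)
  finally have "real (card {n \<in> {1..X}. \<exists>p. prime p \<and> K < p \<and> p dvd n})
                  \<le> (\<Sum>p\<in>?P. real (X div p))"
    unfolding of_nat_sum[symmetric] by (rule of_nat_mono)
  also have "\<dots> \<le> (\<Sum>p\<in>?P. real X * (1 / real p))"
    by (intro sum_mono) (simp add: of_nat_div_le_of_nat)
  finally show ?thesis by (simp add: sum_distrib_left)
qed

lemma prime_reciprocals_tail_ge_half:
  "\<exists>X. (\<Sum>p | prime p \<and> K < p \<and> p \<le> X. 1 / real p) \<ge> 1 / 2"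
proof -
  obtain m where m: "2 * (m + 1) ^ (K + 1) \<le> (2::nat) ^ m" using exists_pow2_ge_poly by blast
  define X where "X = (2::nat) ^ m"
  define S where "S = (\<Sum>p | prime p \<and> K < p \<and> p \<le> X. 1 / real p)"
  let ?A = "{n \<in> {1..X}. \<forall>p. prime p \<longrightarrow> p dvd n \<longrightarrow> p \<le> K}"
  let ?R = "{n \<in> {1..X}. \<exists>p. prime p \<and> K < p \<and> p dvd n}"
  have "X = card {1..X}" by simp
  also have "\<dots> \<le> card (?A \<union> ?R)" by (intro card_mono) (auto simp: not_le)
  also have "\<dots> \<le> card ?A + card ?R" by (rule card_Un_le)
  finally have "real X \<le> real (card ?A) + real (card ?R)" by linarith
  moreover have "card ?A \<le> (m + 1) ^ (K + 1)" by (rule card_smooth_le) (simp add: X_def)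
  moreover have "real (card ?R) \<le> real X * S" unfolding S_def by (rule card_rough_le)
  moreover have "2 * real ((m + 1) ^ (K + 1)) \<le> real X"
    using m unfolding X_def by (metis of_nat_le_iff of_nat_mult of_nat_numeral)
  ultimately have "real X * (1 / 2) \<le> real X * S" by linarith
  then have "1 / 2 \<le> S" unfolding X_def by simp
  then show ?thesis unfolding S_def by blast
qed

lemma prime_reciprocals_tail_unbounded:
  "\<exists>X. (\<Sum>p | prime p \<and> K < p \<and> p \<le> X. 1 / real p) \<ge> C"
proof -
  have halves: "\<exists>X. (\<Sum>p | prime p \<and> K < p \<and> p \<le> X. 1 / real p) \<ge> real c / 2" for c
  proof (induction c)
    case 0
    show ?case by (intro exI[of _ 0] sum_nonneg) auto
  next
    case (Suc c)
    then obtain X where X: "(\<Sum>p | prime p \<and> K < p \<and> p \<le> X. 1 / real p) \<ge> real c / 2"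
      by blast
    obtain Y where Y: "(\<Sum>p | prime p \<and> max K X < p \<and> p \<le> Y. 1 / real p) \<ge> 1 / 2"
      using prime_reciprocals_tail_ge_half by blast
    let ?S1 = "{p. prime p \<and> K < p \<and> p \<le> X}"
    let ?S2 = "{p. prime p \<and> max K X < p \<and> p \<le> Y}"
    have "real (Suc c) / 2 \<le> (\<Sum>p\<in>?S1. 1 / real p) + (\<Sum>p\<in>?S2. 1 / real p)"
      using X Y by (simp add: add_divide_distrib)
    also have "\<dots> = (\<Sum>p\<in>?S1 \<union> ?S2. 1 / real p)"
      by (rule sum.union_disjoint[symmetric]) auto
    also have "\<dots> \<le> (\<Sum>p | prime p \<and> K < p \<and> p \<le> max X Y. 1 / real p)"
      by (rule sum_mono2) auto
    finally show ?case by blast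
  qed
  obtain c :: nat where c: "2 * C \<le> real c" using real_nat_ceiling_ge by blast
  from halves[of c] obtain X where "real c / 2 \<le> (\<Sum>p | prime p \<and> K < p \<and> p \<le> X. 1 / real p)"
    by blast
  with c show ?thesis by (intro exI[of _ X]) linarith
qed

definition multiples_below_square :: "nat \<Rightarrow> nat set" where
  "multiples_below_square p = {d. p dvd d \<and> 0 < d \<and> d < p * p}"

lemma finite_multiples_below_square: "finite (multiples_below_square p)"
  unfolding multiples_below_square_def by (rule finite_subset[of _ "{..<p * p}"]) auto

lemma multiples_below_square_disjoint:
  assumes "prime p" "prime q" "p \<noteq> q"
  shows "multiples_below_square p \<inter> multiples_below_square q = {}"
proof (rule ccontr)
  assume "multiples_below_square p \<inter> multiples_below_square q \<noteq> {}"
  then obtain d where d: "p dvd d" "q dvd d" "0 < d" "d < p * p" "d < q * q"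
    unfolding multiples_below_square_def by auto
  have "p * q dvd d" using d assms by (intro divides_mult primes_coprime) auto
  then have "p * q \<le> d" using d by (intro dvd_imp_le) auto
  moreover have "p * p \<le> p * q \<or> q * q \<le> p * q" by (cases "p \<le> q") (auto simp: mult.commute)
  ultimately show False using d by linarith
qed

lemma B_eq_image: "B n = (\<lambda>k. k * n) ` {1..n}"
  unfolding B_def by auto

lemma finite_B: "finite (B n)"
  by (simp add: B_eq_image)

lemma card_B_le: "card (B n) \<le> n"
  using card_image_le[of "{1..n}" "\<lambda>k. k * n"] by (simp add: B_eq_image)

lemma B_diff_in_multiples_below_square:
  assumes "l \<in> B n" "m \<in> B n" "m < l"
  shows "l - m \<in> multiples_below_square n"
proof -
  obtain i k where "l = i * n" "m = k * n" "1 \<le> k" "i \<le> n" using assms unfolding B_def by auto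
  moreover from this have "l - m = (i - k) * n" "i - k < n"
    using \<open>m < l\<close> by (auto simp: diff_mult_distrib)
  ultimately show ?thesis
    using assms unfolding multiples_below_square_def by (auto simp: mult.commute)
qed

lemma B_pair_sum_le:
  fixes a :: "nat \<Rightarrow> real"
  assumes nonneg: "\<And>n. n \<ge> 1 \<Longrightarrow> a n \<ge> 0"
  shows "(\<Sum>(l, m) \<in> {(l, m). l \<in> B n \<and> m \<in> B n \<and> m < l}. a (l - m))
           \<le> real n * sum a (multiples_below_square n)"
proof -
  let ?D = "multiples_below_square n"
  have "{(l, m). l \<in> B n \<and> m \<in> B n \<and> m < l} = prod.swap ` (SIGMA m:B n. {l \<in> B n. m < l})"
    by auto
  then have "(\<Sum>(l, m) \<in> {(l, m). l \<in> B n \<and> m \<in> B n \<and> m < l}. a (l - m))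
               = (\<Sum>m\<in>B n. \<Sum>l\<in>{l \<in> B n. m < l}. a (l - m))"
    by (simp add: sum.reindex sum.Sigma finite_B)
  also have "\<dots> \<le> (\<Sum>m\<in>B n. sum a ?D)"
  proof (rule sum_mono)
    fix m assume m: "m \<in> B n"
    have "(\<Sum>l\<in>{l \<in> B n. m < l}. a (l - m)) = sum a ((\<lambda>l. l - m) ` {l \<in> B n. m < l})"
      by (rule sum.reindex[symmetric, unfolded comp_def]) (auto simp: inj_on_def)
    also have "\<dots> \<le> sum a ?D"
      using m B_diff_in_multiples_below_square nonneg
      by (intro sum_mono2 finite_multiples_below_square)
         (auto simp: multiples_below_square_def)
    finally show "(\<Sum>l\<in>{l \<in> B n. m < l}. a (l - m)) \<le> sum a ?D" .
  qed
  also have "\<dots> \<le> real n * sum a ?D"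
    using card_B_le nonneg
    by (auto intro!: mult_right_mono sum_nonneg simp: multiples_below_square_def)
  finally show ?thesis .
qed

lemma sum_multiples_below_square_le_suminf:
  fixes a :: "nat \<Rightarrow> real"
  assumes nonneg: "\<And>n. n \<ge> 1 \<Longrightarrow> a n \<ge> 0"
    and summ: "summable (\<lambda>n. a (Suc n))"
    and Q: "finite Q" "\<And>p. p \<in> Q \<Longrightarrow> prime p"
  shows "(\<Sum>p\<in>Q. sum a (multiples_below_square p)) \<le> (\<Sum>n. a (Suc n))"
proof -
  define N where "N = (\<Sum>p\<in>Q. p * p)"
  have "(\<Sum>p\<in>Q. sum a (multiples_below_square p)) = sum a (\<Union>p\<in>Q. multiples_below_square p)"
    using Q multiples_below_square_disjoint
    by (intro sum.UNION_disjoint[symmetric]) (auto simp: finite_multiples_below_square)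
  also have "\<dots> \<le> sum a {1..N}"
  proof (rule sum_mono2)
    show "(\<Union>p\<in>Q. multiples_below_square p) \<subseteq> {1..N}"
    proof
      fix d assume "d \<in> (\<Union>p\<in>Q. multiples_below_square p)"
      then obtain p where p: "p \<in> Q" "d \<in> multiples_below_square p" by auto
      have "p * p \<le> N" unfolding N_def using p Q by (intro member_le_sum) auto
      then show "d \<in> {1..N}" using p unfolding multiples_below_square_def by auto
    qed
  qed (use nonneg in auto)
  also have "\<dots> = (\<Sum>n<N. a (Suc n))"
    using sum.atLeast1_atMost_eq[of a N] by simp
  also have "\<dots> \<le> (\<Sum>n. a (Suc n))" by (intro sum_le_suminf summ) (auto intro: nonneg)
  finally show ?thesis .
qed

theorem corollary6:
  fixes a :: "nat \<Rightarrow> real"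
  assumes nonneg: "\<And>n. n \<ge> 1 \<Longrightarrow> a n \<ge> 0"
    and summ: "summable (\<lambda>n. a (Suc n))"
    and bound: "(\<Sum>n. a (Suc n)) \<le> 1"
    and eps: "\<epsilon> > 0"
  shows "infinite {n::nat. n \<ge> 1 \<and>
           (\<Sum>(l, m) \<in> {(l, m). l \<in> B n \<and> m \<in> B n \<and> m < l}. a (l - m)) < \<epsilon>}"
  (is "infinite ?S")
proof
  assume "finite ?S"
  then obtain M where M: "\<And>n. n \<in> ?S \<Longrightarrow> n < M" by (auto simp: finite_nat_set_iff_bounded)
  obtain X where X: "(\<Sum>p | prime p \<and> M < p \<and> p \<le> X. 1 / real p) \<ge> 2 / \<epsilon>"
    using prime_reciprocals_tail_unbounded by blast
  let ?Q = "{p. prime p \<and> M < p \<and> p \<le> X}"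
  have mass: "\<epsilon> * (1 / real p) \<le> sum a (multiples_below_square p)" if p: "p \<in> ?Q" for p
  proof -
    have "p \<ge> 1" using p prime_gt_0_nat by (simp add: Suc_le_eq)
    moreover have "p \<notin> ?S"
    proof
      assume "p \<in> ?S"
      then have "p < M" by (rule M)
      with p show False by simp
    qed
    ultimately have "\<epsilon> \<le> (\<Sum>(l, m) \<in> {(l, m). l \<in> B p \<and> m \<in> B p \<and> m < l}. a (l - m))" by auto
    also have "\<dots> \<le> real p * sum a (multiples_below_square p)" by (rule B_pair_sum_le[OF nonneg])
    finally show ?thesis using \<open>p \<ge> 1\<close> by (simp add: field_simps)
  qed
  have "2 = \<epsilon> * (2 / \<epsilon>)" using eps by simp
  also have "\<dots> \<le> \<epsilon> * (\<Sum>p\<in>?Q. 1 / real p)" using X eps by (intro mult_left_mono) auto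
  also have "\<dots> = (\<Sum>p\<in>?Q. \<epsilon> * (1 / real p))" by (rule sum_distrib_left)
  also have "\<dots> \<le> (\<Sum>p\<in>?Q. sum a (multiples_below_square p))" by (intro sum_mono mass)
  also have "\<dots> \<le> (\<Sum>n. a (Suc n))"
    by (rule sum_multiples_below_square_le_suminf[OF nonneg summ]) (auto intro: finite_subset[of _ "{..X}"])
  also have "\<dots> \<le> 1" by (rule bound)
  finally show False by simp
qed

end
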